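(* Let $\nu:\binom{E}{d}\to\mathbb{Z}\cup\{\infty\}$ be a matroid valuation and let $\beta\in\mathbb{R}^E$. Then $$C^\nu_\beta=\{\alpha\in\mathbb{R}^E:\ \alpha_i-\alpha_j\ge\nu(B)-\nu(B')\text{ for all }B\in\mathcal{B}^\nu_\beta,\ B'\in\mathcal{B}^\nu\text{ such that }B'=B-i+j\}.$$
   Context: $E$ is a finite set and $\binom{E}{d}$ the set of its $d$-subsets; $B-i+j:=(B\cup\{j\})\setminus\{i\}$, $e_B:=\sum_{i\in B}e_i$. A matroid valuation is $\nu:\binom{E}{d}\to\mathbb{R}\cup\{\infty\}$ with (V1) $\nu(B)<\infty$ for some $B$; (V2) for all $B,B'$ and $i\in B\setminus B'$ there is $j\in B'\setminus B$ with $\nu(B)+\nu(B')\ge\nu(B-i+j)+\nu(B'+i-j)$. $\mathcal{B}^\nu:=\{B:\nu(B)<\infty\}$. For $\alpha\in\mathbb{R}^E$, $g^\nu(\alpha):=\sup\{e_{B'}^T\alpha-\nu(B'):B'\in\binom{E}{d}\}$ and $\mathcal{B}^\nu_\alpha:=\{B\in\binom{E}{d}:e_B^T\alpha-\nu(B)=g^\nu(\alpha)\}$. $C^\nu_\beta:=\{\alpha\in\mathbb{R}^E:\mathcal{B}^\nu_\alpha\supseteq\mathcal{B}^\nu_\beta\}$. *)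

theory Defs
  imports "HOL-Library.Extended_Real"
begin

definition dsubsets :: "'e set \<Rightarrow> nat \<Rightarrow> 'e set set" where
  "dsubsets E d = {B. B \<subseteq> E \<and> card B = d}"

definition exch :: "'e set \<Rightarrow> 'e \<Rightarrow> 'e \<Rightarrow> 'e set" where
  "exch B i j = (B \<union> {j}) - {i}"

definition matroid_valuation :: "'e set \<Rightarrow> nat \<Rightarrow> ('e set \<Rightarrow> ereal) \<Rightarrow> bool" where
  "matroid_valuation E d \<nu> \<longleftrightarrow>
     (\<forall>B\<in>dsubsets E d. \<nu> B \<noteq> -\<infinity>) \<and>
     (\<exists>B\<in>dsubsets E d. \<nu> B < \<infinity>) \<and>
     (\<forall>B\<in>dsubsets E d. \<forall>B'\<in>dsubsets E d. \<forall>i\<in>B - B'. \<exists>j\<in>B' - B.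
        \<nu> B + \<nu> B' \<ge> \<nu> (exch B i j) + \<nu> (exch B' j i))"

definition bases_of :: "'e set \<Rightarrow> nat \<Rightarrow> ('e set \<Rightarrow> ereal) \<Rightarrow> 'e set set" where
  "bases_of E d \<nu> = {B \<in> dsubsets E d. \<nu> B < \<infinity>}"

definition gfun :: "'e set \<Rightarrow> nat \<Rightarrow> ('e set \<Rightarrow> ereal) \<Rightarrow> ('e \<Rightarrow> real) \<Rightarrow> ereal" where
  "gfun E d \<nu> \<alpha> = (SUP B'\<in>dsubsets E d. ereal (\<Sum>i\<in>B'. \<alpha> i) - \<nu> B')"

definition opt_bases :: "'e set \<Rightarrow> nat \<Rightarrow> ('e set \<Rightarrow> ereal) \<Rightarrow> ('e \<Rightarrow> real) \<Rightarrow> 'e set set" where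
  "opt_bases E d \<nu> \<alpha> = {B \<in> dsubsets E d. ereal (\<Sum>i\<in>B. \<alpha> i) - \<nu> B = gfun E d \<nu> \<alpha>}"

definition cone :: "'e set \<Rightarrow> nat \<Rightarrow> ('e set \<Rightarrow> ereal) \<Rightarrow> ('e \<Rightarrow> real) \<Rightarrow> ('e \<Rightarrow> real) set" where
  "cone E d \<nu> \<beta> = {\<alpha>. opt_bases E d \<nu> \<alpha> \<supseteq> opt_bases E d \<nu> \<beta>}"

end

theory Submission
  imports Defs
begin

text \<open>
  A basis \<open>B\<close> with finite value is optimal for \<open>\<alpha>\<close> iff no single exchange \<open>B - i + j\<close>
  improves it. For sufficiency, take a basis \<open>C\<close> and \<open>i \<in> C - B\<close>; the exchange axiom gives
  \<open>j \<in> B - C\<close> with \<open>\<nu>(C - i + j) + \<nu>(B - j + i) \<le> \<nu> C + \<nu> B\<close>, and local optimality of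
  \<open>B\<close> at the swap \<open>(j, i)\<close> then makes \<open>C - i + j\<close> at least as good as \<open>C\<close> while closer
  to \<open>B\<close>; induction on \<open>|C - B|\<close> concludes. Membership in \<open>C\<^sup>\<nu>\<^sub>\<beta>\<close> says that every
  \<open>\<beta>\<close>-optimal basis is \<open>\<alpha>\<close>-optimal, which is therefore the system of local inequalities.
\<close>

definition locally_optimal ::
    "'e set \<Rightarrow> nat \<Rightarrow> ('e set \<Rightarrow> ereal) \<Rightarrow> ('e \<Rightarrow> real) \<Rightarrow> 'e set \<Rightarrow> bool" where
  "locally_optimal E d \<nu> \<alpha> B \<longleftrightarrow>
     (\<forall>B'\<in>bases_of E d \<nu>. \<forall>i j.
        i \<in> B \<and> j \<notin> B \<and> B' = exch B i j \<longrightarrow> ereal (\<alpha> i - \<alpha> j) \<ge> \<nu> B - \<nu> B')"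

lemma exch_eq_insert_Diff: "i \<in> C \<Longrightarrow> j \<notin> C \<Longrightarrow> exch C i j = insert j (C - {i})"
  unfolding exch_def by auto

lemma sum_exch:
  assumes "finite C" "i \<in> C" "j \<notin> C"
  shows "sum \<alpha> (exch C i j) = sum \<alpha> C - \<alpha> i + (\<alpha> j :: real)"
  using assms by (simp add: exch_eq_insert_Diff sum_diff1)

lemma finite_dsubsets_member: "finite E \<Longrightarrow> C \<in> dsubsets E d \<Longrightarrow> finite C"
  unfolding dsubsets_def by (auto intro: finite_subset)

lemma exch_in_dsubsets:
  assumes "C \<in> dsubsets E d" "finite E" "i \<in> C" "j \<notin> C" "j \<in> E"
  shows "exch C i j \<in> dsubsets E d"
proof -
  have "finite C" using assms finite_dsubsets_member by blast
  then have "card (exch C i j) = card C"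
    using assms(3,4) by (simp add: exch_eq_insert_Diff card_insert_if card_Diff_singleton)
      (metis One_nat_def Suc_pred card_gt_0_iff empty_iff)
  then show ?thesis using assms unfolding dsubsets_def exch_def by auto
qed

lemma valuation_finite_value:
  assumes "matroid_valuation E d \<nu>" "C \<in> dsubsets E d" "\<nu> C < \<infinity>"
  obtains c where "\<nu> C = ereal c"
  using assms unfolding matroid_valuation_def by (cases "\<nu> C") auto

lemma opt_bases_subset_bases_of:
  assumes mv: "matroid_valuation E d \<nu>"
  shows "opt_bases E d \<nu> \<alpha> \<subseteq> bases_of E d \<nu>"
proof
  fix B assume B: "B \<in> opt_bases E d \<nu> \<alpha>"
  obtain B0 where B0: "B0 \<in> dsubsets E d" "\<nu> B0 < \<infinity>"
    using mv unfolding matroid_valuation_def by auto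
  then obtain r where r: "\<nu> B0 = ereal r" using valuation_finite_value[OF mv] by blast
  have "ereal (sum \<alpha> B0) - \<nu> B0 \<le> gfun E d \<nu> \<alpha>"
    unfolding gfun_def using B0 by (intro SUP_upper) auto
  then have "gfun E d \<nu> \<alpha> \<noteq> -\<infinity>" using r by auto
  then have "\<nu> B \<noteq> \<infinity>" using B unfolding opt_bases_def by auto
  then show "B \<in> bases_of E d \<nu>"
    using B unfolding opt_bases_def bases_of_def by (simp add: top.not_eq_extremum)
qed

lemma opt_bases_iff_maximal:
  "B \<in> opt_bases E d \<nu> \<alpha> \<longleftrightarrow> B \<in> dsubsets E d \<and>
     (\<forall>C\<in>dsubsets E d. ereal (sum \<alpha> C) - \<nu> C \<le> ereal (sum \<alpha> B) - \<nu> B)"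
  unfolding opt_bases_def gfun_def by (auto intro!: antisym SUP_least SUP_upper)

lemma opt_basis_locally_optimal:
  assumes mv: "matroid_valuation E d \<nu>" and fin: "finite E" and B: "B \<in> opt_bases E d \<nu> \<alpha>"
  shows "locally_optimal E d \<nu> \<alpha> B"
  unfolding locally_optimal_def
proof (intro ballI allI impI, elim conjE)
  fix B' i j assume B': "B' \<in> bases_of E d \<nu>" and i: "i \<in> B" and j: "j \<notin> B"
    and B'_eq: "B' = exch B i j"
  have BE: "B \<in> dsubsets E d"
    and max: "\<forall>C\<in>dsubsets E d. ereal (sum \<alpha> C) - \<nu> C \<le> ereal (sum \<alpha> B) - \<nu> B"
    using B opt_bases_iff_maximal by blast+
  have "B \<in> bases_of E d \<nu>" using B opt_bases_subset_bases_of[OF mv] by blast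
  then obtain b where b: "\<nu> B = ereal b"
    using valuation_finite_value[OF mv] unfolding bases_of_def by blast
  obtain b' where b': "\<nu> B' = ereal b'"
    using B' valuation_finite_value[OF mv] unfolding bases_of_def by blast
  have "sum \<alpha> B' - b' \<le> sum \<alpha> B - b"
    using max B' b b' unfolding bases_of_def by force
  moreover have "sum \<alpha> B' = sum \<alpha> B - \<alpha> i + \<alpha> j"
    using sum_exch[OF finite_dsubsets_member[OF fin BE]] i j B'_eq by simp
  ultimately show "ereal (\<alpha> i - \<alpha> j) \<ge> \<nu> B - \<nu> B'" using b b' by simp
qed

lemma exchange_towards_locally_optimal:
  assumes mv: "matroid_valuation E d \<nu>" and fin: "finite E"
    and B: "B \<in> bases_of E d \<nu>" and loc: "locally_optimal E d \<nu> \<alpha> B"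
    and C: "C \<in> bases_of E d \<nu>" and i: "i \<in> C - B"
  obtains j where "j \<in> B - C" "exch C i j \<in> dsubsets E d"
    "ereal (sum \<alpha> C) - \<nu> C \<le> ereal (sum \<alpha> (exch C i j)) - \<nu> (exch C i j)"
proof -
  have BE: "B \<in> dsubsets E d" and CE: "C \<in> dsubsets E d"
    using B C unfolding bases_of_def by auto
  obtain b where b: "\<nu> B = ereal b"
    using B valuation_finite_value[OF mv] unfolding bases_of_def by blast
  obtain c where c: "\<nu> C = ereal c"
    using C valuation_finite_value[OF mv] unfolding bases_of_def by blast
  obtain j where j: "j \<in> B - C" and ex: "\<nu> (exch C i j) + \<nu> (exch B j i) \<le> \<nu> C + \<nu> B"
    using mv CE BE i unfolding matroid_valuation_def by blast
  have jE: "j \<in> E" and iE: "i \<in> E" using i j BE CE unfolding dsubsets_def by auto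
  have C'E: "exch C i j \<in> dsubsets E d" and B'E: "exch B j i \<in> dsubsets E d"
    using exch_in_dsubsets[OF CE fin] exch_in_dsubsets[OF BE fin] i j iE jE by auto
  have bounded: "\<nu> (exch C i j) + \<nu> (exch B j i) \<le> ereal (c + b)" using ex b c by simp
  have "\<nu> (exch C i j) \<noteq> -\<infinity>" "\<nu> (exch B j i) \<noteq> -\<infinity>"
    using C'E B'E mv unfolding matroid_valuation_def by auto
  with bounded obtain x y where x: "\<nu> (exch C i j) = ereal x" and y: "\<nu> (exch B j i) = ereal y"
    by (cases "\<nu> (exch C i j)"; cases "\<nu> (exch B j i)") auto
  have "exch B j i \<in> bases_of E d \<nu>" using B'E y unfolding bases_of_def by simp
  then have "ereal (\<alpha> j - \<alpha> i) \<ge> \<nu> B - \<nu> (exch B j i)"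
    using bspec[OF loc[unfolded locally_optimal_def], THEN spec[of _ j], THEN spec[of _ i]] i j
    by simp
  then have "b - y \<le> \<alpha> j - \<alpha> i" using b y by simp
  moreover have "x + y \<le> c + b" using bounded x y by simp
  moreover have "sum \<alpha> (exch C i j) = sum \<alpha> C - \<alpha> i + \<alpha> j"
    using sum_exch[OF finite_dsubsets_member[OF fin CE]] i j by simp
  ultimately have "sum \<alpha> C - c \<le> sum \<alpha> (exch C i j) - x" by linarith
  then show ?thesis by (intro that[OF j C'E]) (simp add: c x)
qed

lemma locally_optimal_dominates:
  assumes mv: "matroid_valuation E d \<nu>" and fin: "finite E"
    and B: "B \<in> bases_of E d \<nu>" and loc: "locally_optimal E d \<nu> \<alpha> B"
  shows "C \<in> dsubsets E d \<Longrightarrow> ereal (sum \<alpha> C) - \<nu> C \<le> ereal (sum \<alpha> B) - \<nu> B"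
proof (induction "card (C - B)" arbitrary: C rule: less_induct)
  case less
  have BE: "B \<in> dsubsets E d" using B unfolding bases_of_def by auto
  show ?case
  proof (cases "C - B = {}")
    case True
    moreover have "card C = card B" using less.prems BE unfolding dsubsets_def by simp
    ultimately have "C = B" using card_subset_eq[OF finite_dsubsets_member[OF fin BE]] by blast
    then show ?thesis by simp
  next
    case False
    then obtain i where i: "i \<in> C - B" by blast
    show ?thesis
    proof (cases "\<nu> C = \<infinity>")
      case False
      then have "C \<in> bases_of E d \<nu>"
        using less.prems unfolding bases_of_def by (simp add: top.not_eq_extremum)
      then obtain j where j: "j \<in> B - C" and C'E: "exch C i j \<in> dsubsets E d"
        and better: "ereal (sum \<alpha> C) - \<nu> C \<le> ereal (sum \<alpha> (exch C i j)) - \<nu> (exch C i j)"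
        by (rule exchange_towards_locally_optimal[OF mv fin B loc _ i])
      have "exch C i j - B = (C - B) - {i}" using j unfolding exch_def by auto
      then have "card (exch C i j - B) < card (C - B)"
        using i finite_dsubsets_member[OF fin less.prems] by (metis card_Diff1_less finite_Diff)
      then show ?thesis using less.hyps C'E better by (meson order_trans)
    qed simp
  qed
qed

lemma opt_basis_iff_locally_optimal:
  assumes "matroid_valuation E d \<nu>" "finite E" "B \<in> bases_of E d \<nu>"
  shows "B \<in> opt_bases E d \<nu> \<alpha> \<longleftrightarrow> locally_optimal E d \<nu> \<alpha> B"
proof
  show "locally_optimal E d \<nu> \<alpha> B" if "B \<in> opt_bases E d \<nu> \<alpha>"
    using opt_basis_locally_optimal[OF assms(1,2) that] .
  show "B \<in> opt_bases E d \<nu> \<alpha>" if "locally_optimal E d \<nu> \<alpha> B"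
    using locally_optimal_dominates[OF assms that] assms(3)
    unfolding opt_bases_iff_maximal bases_of_def by blast
qed

theorem mainTheorem15:
  fixes E :: "'e set" and d :: nat and \<nu> :: "'e set \<Rightarrow> ereal" and \<beta> :: "'e \<Rightarrow> real"
  assumes "finite E"
    and "matroid_valuation E d \<nu>"
    and "\<forall>B\<in>dsubsets E d. \<nu> B = \<infinity> \<or> (\<exists>z::int. \<nu> B = ereal (real_of_int z))"
  shows "cone E d \<nu> \<beta> =
    {\<alpha>. \<forall>B\<in>opt_bases E d \<nu> \<beta>. \<forall>B'\<in>bases_of E d \<nu>. \<forall>i j.
        i \<in> B \<and> j \<notin> B \<and> B' = exch B i j \<longrightarrow> ereal (\<alpha> i - \<alpha> j) \<ge> \<nu> B - \<nu> B'}"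
proof -
  have "\<alpha> \<in> cone E d \<nu> \<beta> \<longleftrightarrow> (\<forall>B\<in>opt_bases E d \<nu> \<beta>. locally_optimal E d \<nu> \<alpha> B)" for \<alpha>
    using opt_basis_iff_locally_optimal[OF assms(2,1)] opt_bases_subset_bases_of[OF assms(2)]
    unfolding cone_def by blast
  then show ?thesis by (auto simp: locally_optimal_def)
qed

end
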